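(* Let $\lambda>1$, $A=\mathrm{diag}(1,\lambda)$, and $f(x)=\tfrac12 x^TAx$ on $\mathbb{R}^2$. Consider the iteration $x_{k+1}=x_k-\alpha_kg_k$, $g_k=Ax_k$, where $x_1\in\mathbb{R}^2$, $x_2=x_1-\alpha_1g_1$ for some $\alpha_1>0$, and for $k\ge 2$ $$\alpha_k=\gamma_k\frac{s_{k-1}^Ts_{k-1}}{s_{k-1}^Ty_{k-1}}+(1-\gamma_k)\frac{s_{k-1}^Ty_{k-1}}{y_{k-1}^Ty_{k-1}},\qquad s_{k-1}=x_k-x_{k-1},\ y_{k-1}=g_k-g_{k-1},$$ with $\gamma_k\in(0,1)$ for all $k$. Assume $g_1^{(i)}\neq0$ and $g_2^{(i)}\ne0$ for $i=1,2$. Let $q_k=(g_k^{(1)})^2/(g_k^{(2)})^2$, $M_k=\log q_k$, let $\theta$ be a root of $\theta^2-\theta+2=0$, and $\xi_k=M_k+(\theta-1)M_{k-1}$. If $|\xi_2|>8\log\lambda$, then $\{\|g_k\|\}$ converges to zero $R$-superlinearly.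
   Context: $g_k^{(i)}$ is the $i$-th component of $g_k$ and $\|\cdot\|$ the Euclidean norm. A nonnegative sequence $\{a_k\}$ converges to zero $R$-superlinearly if $\lim_{k\to\infty}a_k^{1/k}=0$. *)

theory Defs
  imports "HOL-Analysis.Analysis"
begin

definition diagA :: "real \<Rightarrow> real^2^2" where
  "diagA lam = (\<chi> i j. if i = j then (if i = 1 then 1 else lam) else 0)"

definition fq :: "real \<Rightarrow> real^2 \<Rightarrow> real" where
  "fq lam x = (1/2) * (x \<bullet> (diagA lam *v x))"

end

(*
  Write g k = (u k, v k), so M k = ln ((u k)^2 / (v k)^2). Then u (k+1) = (1 - \<alpha> k) u k and
  v (k+1) = (1 - lam \<alpha> k) v k, and \<alpha> k depends only on w = (u (k-1))^2 and z = (v (k-1))^2: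
  1 - \<alpha> k = -(z / w) \<rho> (1 - lam \<alpha> k) with 1 \<le> \<rho> \<le> lam, and
  |1 - \<alpha> k| |1 - lam \<alpha> k| \<le> lam^3 w z / (w + z)^2 \<le> lam^3 exp (-|M (k-1)|).
  Hence M (k+1) = M k - 2 M (k-1) + 2 ln \<rho>, and S k = ln |u k| + ln |v k| satisfies
  S (k+1) \<le> S k + 3 ln lam - |M (k-1)|. For a root \<theta> of \<theta>^2 - \<theta> + 2, the quantity
  \<xi> k = M k + (\<theta> - 1) M (k-1) obeys \<xi> (k+1) = \<theta> \<xi> k + 2 ln \<rho> with |\<theta>| = sqrt 2,
  so |\<xi> 2| > 8 ln lam forces |M k| + |M (k-1)| to grow geometrically. Summing, S k and
  ln (norm (g k)) \<le> ln 2 + max (ln |u k|) (ln |v k|) fall below -c (5/4)^k + O(k), which is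
  R-superlinear convergence.
*)
theory Submission
  imports Defs "HOL-Real_Asymp.Real_Asymp"
begin

lemma bb_stepsize_residuals:
  fixes w z lam c a :: real
  assumes w: "0 < w" and z: "0 < z" and lam: "1 < lam" and c: "0 < c" "c < 1"
    and a: "a = c * ((w + z) / (w + lam * z)) + (1 - c) * ((w + lam * z) / (w + lam^2 * z))"
  obtains N D where "0 < D" "D \<le> N" "N \<le> lam * D" "D \<le> 1 / (w + z)"
    "1 - a = (lam - 1) * z * N" "lam * a - 1 = (lam - 1) * w * D"
proof -
  define P where "P = w + lam * z"
  define Q where "Q = w + lam^2 * z"
  have P: "w + z \<le> P" using z lam unfolding P_def by simp
  have Q: "P \<le> Q" using z lam unfolding P_def Q_def power2_eq_square by simp
  have "0 < P" "0 < Q" using P Q w z by linarith+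
  define N where "N = c / P + (1 - c) * lam / Q"
  define D where "D = c / P + (1 - c) / Q"
  show thesis
  proof (rule that[of D N])
    show "0 < D" unfolding D_def using c \<open>0 < P\<close> \<open>0 < Q\<close> by (simp add: add_pos_pos)
    show "D \<le> N" unfolding D_def N_def using c \<open>0 < Q\<close> lam by (simp add: divide_right_mono)
    show "N \<le> lam * D" unfolding D_def N_def using c \<open>0 < P\<close> lam
      by (simp add: algebra_simps divide_right_mono)
    have "c / P \<le> c / (w + z)" using P c w z by (simp add: frac_le)
    moreover have "(1 - c) / Q \<le> (1 - c) / (w + z)" using P Q c w z by (simp add: frac_le)
    moreover have "c / (w + z) + (1 - c) / (w + z) = 1 / (w + z)"
      by (simp add: add_divide_distrib[symmetric])
    ultimately show "D \<le> 1 / (w + z)" unfolding D_def by linarith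
    have "1 - a = c * ((P - (w + z)) / P) + (1 - c) * ((Q - P) / Q)"
      unfolding a P_def[symmetric] Q_def[symmetric] using \<open>0 < P\<close> \<open>0 < Q\<close> by (simp add: field_simps)
    also have "\<dots> = (lam - 1) * z * N" unfolding N_def P_def Q_def
      by (simp add: algebra_simps power2_eq_square add_divide_distrib diff_divide_distrib)
    finally show "1 - a = (lam - 1) * z * N" .
    have "lam * a - 1 = c * ((lam * (w + z) - P) / P) + (1 - c) * ((lam * P - Q) / Q)"
      unfolding a P_def[symmetric] Q_def[symmetric] using \<open>0 < P\<close> \<open>0 < Q\<close> by (simp add: field_simps)
    also have "\<dots> = (lam - 1) * w * D" unfolding D_def P_def Q_def
      by (simp add: algebra_simps power2_eq_square add_divide_distrib diff_divide_distrib)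
    finally show "lam * a - 1 = (lam - 1) * w * D" .
  qed
qed

lemma bb_stepsize_bounds:
  fixes w z lam c a :: real
  assumes w: "0 < w" and z: "0 < z" and lam: "1 < lam" and c: "0 < c" "c < 1"
    and a: "a = c * ((w + z) / (w + lam * z)) + (1 - c) * ((w + lam * z) / (w + lam^2 * z))"
  shows "1 / lam < a" "a < 1"
    and "\<bar>1 - a\<bar> * \<bar>1 - lam * a\<bar> \<le> lam^3 * (w * z / (w + z)^2)"
    and "\<exists>\<rho>. 1 \<le> \<rho> \<and> \<rho> \<le> lam \<and> 1 - a = - (z / w) * \<rho> * (1 - lam * a)"
proof -
  obtain N D where D: "0 < D" "D \<le> N" "N \<le> lam * D" "D \<le> 1 / (w + z)"
    and res: "1 - a = (lam - 1) * z * N" "lam * a - 1 = (lam - 1) * w * D"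
    using bb_stepsize_residuals[OF assms] .
  have pos: "0 < 1 - a" "0 < lam * a - 1" unfolding res using D w z lam by simp_all
  then show "a < 1" "1 / lam < a" using lam by (simp_all add: field_simps)
  have "\<bar>1 - a\<bar> * \<bar>1 - lam * a\<bar> = (1 - a) * (lam * a - 1)"
    using pos by simp
  also have "\<dots> = (lam - 1)^2 * (w * z) * (N * D)"
    unfolding res by (simp add: power2_eq_square algebra_simps)
  also have "\<dots> \<le> lam^2 * (w * z) * (lam * (D * D))"
  proof (rule mult_mono)
    show "(lam - 1)^2 * (w * z) \<le> lam^2 * (w * z)"
      using lam w z by (intro mult_right_mono power_mono) auto
    show "N * D \<le> lam * (D * D)" using D by (simp add: mult_right_mono mult.assoc[symmetric])
  qed (use w z D in auto)
  also have "\<dots> \<le> lam^2 * (w * z) * (lam * ((1 / (w + z)) * (1 / (w + z))))"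
    using D w z lam by (intro mult_left_mono mult_mono) auto
  also have "\<dots> = lam^3 * (w * z / (w + z)^2)" by (simp add: power2_eq_square power3_eq_cube)
  finally show "\<bar>1 - a\<bar> * \<bar>1 - lam * a\<bar> \<le> lam^3 * (w * z / (w + z)^2)" .
  have res2: "1 - lam * a = - ((lam - 1) * w * D)" using res(2) by linarith
  have "1 - a = - (z / w) * (N / D) * (1 - lam * a)"
    unfolding res(1) res2 using w D by (simp add: field_simps)
  moreover have "1 \<le> N / D" "N / D \<le> lam" using D by (simp_all add: field_simps)
  ultimately show "\<exists>\<rho>. 1 \<le> \<rho> \<and> \<rho> \<le> lam \<and> 1 - a = - (z / w) * \<rho> * (1 - lam * a)"
    by blast
qed

lemma ln_product_div_square_sum_le:
  fixes w z :: real
  assumes "0 < w" "0 < z"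
  shows "ln (w * z / (w + z)^2) \<le> - \<bar>ln (w / z)\<bar>"
proof -
  have le: "p * q / (p + q)^2 \<le> p / q" if "0 < p" "0 < q" for p q :: real
  proof -
    have "p * q / (p + q)^2 \<le> p * q / q^2"
      using that by (intro divide_left_mono power_mono) auto
    then show ?thesis using that by (simp add: power2_eq_square)
  qed
  have pos: "0 < w * z / (w + z)^2" using assms by simp
  have "ln (w * z / (w + z)^2) \<le> ln (w / z)" using le[OF assms] pos by simp
  moreover have "ln (w * z / (w + z)^2) \<le> ln (z / w)"
    using le[OF assms(2,1)] pos by (simp add: ac_simps)
  moreover have "ln (z / w) = - ln (w / z)" using assms by (simp add: ln_div)
  ultimately show ?thesis by linarith
qed

lemma quadratic_root_norms:
  fixes \<theta> :: complex
  assumes "\<theta>^2 - \<theta> + 2 = 0"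
  shows "cmod \<theta> = sqrt 2" "cmod (\<theta> - 1) = sqrt 2"
proof -
  have re: "(Re \<theta>)^2 - (Im \<theta>)^2 - Re \<theta> + 2 = 0"
    using arg_cong[OF assms, of Re] by (simp add: power2_eq_square)
  have im: "(2 * Re \<theta> - 1) * Im \<theta> = 0"
    using arg_cong[OF assms, of Im] by (simp add: power2_eq_square algebra_simps)
  have "Im \<theta> \<noteq> 0"
  proof
    assume "Im \<theta> = 0"
    with re have "(Re \<theta> - 1/2)^2 + 7/4 = 0" by (simp add: power2_eq_square algebra_simps)
    moreover have "0 \<le> (Re \<theta> - 1/2)^2" by simp
    ultimately show False by linarith
  qed
  with im have re_half: "Re \<theta> = 1/2" by simp
  have im2: "(Im \<theta>)^2 = 7/4" using re unfolding re_half by (simp add: power2_eq_square; linarith)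
  show "cmod \<theta> = sqrt 2" "cmod (\<theta> - 1) = sqrt 2"
    unfolding cmod_def by (simp_all add: re_half im2) (simp_all add: power2_eq_square)
qed

lemma norm_affine_recurrence_lower_bound:
  fixes \<xi> d :: "nat \<Rightarrow> 'a::real_normed_div_algebra" and \<theta> :: 'a
  assumes rec: "\<And>k. \<xi> (Suc k) = \<theta> * \<xi> k + d k" and d: "\<And>k. norm (d k) \<le> D"
    and r: "1 < r" "r \<le> norm \<theta>"
  shows "r ^ m * (norm (\<xi> 0) - D / (r - 1)) \<le> norm (\<xi> m) - D / (r - 1)"
proof (induction m)
  case 0
  then show ?case by simp
next
  case (Suc m)
  have "r * norm (\<xi> m) - D \<le> norm \<theta> * norm (\<xi> m) - norm (d m)"
    using r d[of m] by (intro diff_mono mult_right_mono) auto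
  also have "\<dots> \<le> norm (\<xi> (Suc m))"
    unfolding rec using norm_diff_ineq[of "\<theta> * \<xi> m" "d m"] by (simp add: norm_mult)
  finally have "r * norm (\<xi> m) - D \<le> norm (\<xi> (Suc m))" .
  moreover have "r * (norm (\<xi> m) - D / (r - 1)) = r * norm (\<xi> m) - D - D / (r - 1)"
    using r by (simp add: field_simps)
  ultimately have "r * (norm (\<xi> m) - D / (r - 1)) \<le> norm (\<xi> (Suc m)) - D / (r - 1)"
    by linarith
  moreover have "r ^ Suc m * (norm (\<xi> 0) - D / (r - 1)) \<le> r * (norm (\<xi> m) - D / (r - 1))"
    using Suc.IH r by simp
  ultimately show ?case by linarith
qed

lemma second_order_recurrence_growth:
  fixes M :: "nat \<Rightarrow> real" and \<theta> :: complex
  assumes \<theta>: "\<theta>^2 - \<theta> + 2 = 0"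
    and rec: "\<And>k. 2 \<le> k \<Longrightarrow> \<bar>M (Suc k) - M k + 2 * M (k - 1)\<bar> \<le> 2 * L"
    and start: "8 * L < cmod (of_real (M 2) + (\<theta> - 1) * of_real (M 1))"
  obtains c where "0 < c" "\<And>k. 2 \<le> k \<Longrightarrow> c * (5/4)^k \<le> \<bar>M k\<bar> + \<bar>M (k - 1)\<bar>"
proof -
  define \<xi> where "\<xi> j = of_real (M (j + 2)) + (\<theta> - 1) * of_real (M (j + 1))" for j
  define d where "d j = complex_of_real (M (j + 3) - M (j + 2) + 2 * M (j + 1))" for j
  have "\<xi> (Suc j) - (\<theta> * \<xi> j + d j) = - ((\<theta>^2 - \<theta> + 2) * of_real (M (j + 1)))" for j
    unfolding \<xi>_def d_def by (simp add: algebra_simps power2_eq_square numeral_eq_Suc)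
  then have xi_rec: "\<xi> (Suc j) = \<theta> * \<xi> j + d j" for j using \<theta> by simp
  have d_le: "norm (d j) \<le> 2 * L" for j
    using rec[of "j + 2"] unfolding d_def norm_of_real by (simp add: numeral_eq_Suc)
  have "0 \<le> L" using rec[of 2] by simp
  have "(5/4)^2 \<le> (sqrt 2)^2" by (simp add: power2_eq_square)
  then have "5/4 \<le> cmod \<theta>" unfolding quadratic_root_norms[OF \<theta>]
    by (rule power2_le_imp_le) simp
  have lower: "(5/4)^m * (cmod (\<xi> 0) - 8 * L) \<le> cmod (\<xi> m) - 8 * L" for m
    using norm_affine_recurrence_lower_bound[where \<xi> = \<xi> and d = d and r = "5/4" and m = m,
        OF xi_rec d_le] \<open>5/4 \<le> cmod \<theta>\<close> by simp
  define e where "e = cmod (\<xi> 0) - 8 * L"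
  have "0 < e" using start unfolding e_def \<xi>_def by (simp add: numeral_2_eq_2)
  show thesis
  proof (rule that[of "e / 2 * (4/5)^2"])
    show "0 < e / 2 * (4/5)^2" using \<open>0 < e\<close> by simp
    fix k :: nat
    assume "2 \<le> k"
    then obtain j where k: "k = j + 2" using le_Suc_ex by (metis add.commute)
    have "cmod (\<xi> j) \<le> \<bar>M k\<bar> + sqrt 2 * \<bar>M (k - 1)\<bar>"
      using norm_triangle_ineq[of "of_real (M k)" "(\<theta> - 1) * of_real (M (k - 1))"]
      unfolding \<xi>_def k by (simp add: norm_mult quadratic_root_norms[OF \<theta>])
    also have "\<dots> \<le> 2 * (\<bar>M k\<bar> + \<bar>M (k - 1)\<bar>)"
      using mult_right_mono[OF less_imp_le[OF sqrt2_less_2], of "\<bar>M (k - 1)\<bar>"] by simp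
    finally have "(5/4)^j * e \<le> 2 * (\<bar>M k\<bar> + \<bar>M (k - 1)\<bar>)"
      using lower[of j] \<open>0 \<le> L\<close> unfolding e_def by linarith
    then show "e / 2 * (4/5)^2 * (5/4)^k \<le> \<bar>M k\<bar> + \<bar>M (k - 1)\<bar>"
      unfolding k by (simp add: power_add power2_eq_square mult_ac)
  qed
qed

lemma log_bound_le_linear_minus_geometric:
  fixes M S :: "nat \<Rightarrow> real" and \<theta> :: complex
  assumes \<theta>: "\<theta>^2 - \<theta> + 2 = 0"
    and rec: "\<And>k. 2 \<le> k \<Longrightarrow> \<bar>M (Suc k) - M k + 2 * M (k - 1)\<bar> \<le> 2 * L"
    and S_dec: "\<And>k. 2 \<le> k \<Longrightarrow> S (Suc k) \<le> S k + 3 * L - \<bar>M (k - 1)\<bar>"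
    and start: "8 * L < cmod (of_real (M 2) + (\<theta> - 1) * of_real (M 1))"
  obtains c where "0 < c" "\<And>k. 6 \<le> k \<Longrightarrow> 2 * S k + \<bar>M k\<bar> \<le> 2 * S 2 + 6 * L * k - c * (5/4)^k"
proof -
  obtain c where "0 < c" and growth: "\<And>k. 2 \<le> k \<Longrightarrow> c * (5/4)^k \<le> \<bar>M k\<bar> + \<bar>M (k - 1)\<bar>"
    using second_order_recurrence_growth[OF \<theta> rec start] by blast
  have "0 \<le> L" using rec[of 2] by simp
  have S_sum: "S (m + 2) \<le> S 2 + 3 * L * m - (\<Sum>j = 1..m. \<bar>M j\<bar>)" for m
  proof (induction m)
    case (Suc m)
    then show ?case using S_dec[of "m + 2"] by (simp add: algebra_simps)
  qed (simp add: numeral_2_eq_2)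
  show thesis
  proof (rule that[of "2 * c * (4/5)^4"])
    show "0 < 2 * c * (4/5)^4" using \<open>0 < c\<close> by simp
    fix k :: nat
    assume "6 \<le> k"
    then obtain j where k: "k = j + 6" using le_Suc_ex by (metis add.commute)
    \<comment> \<open>Two steps of the recurrence cancel M (k - 1), so that 2 S k absorbs the term \<bar>M k\<bar>.\<close>
    have "\<bar>M k\<bar> \<le> \<bar>M (j + 4)\<bar> + 2 * \<bar>M (j + 3)\<bar> + 4 * L"
      using rec[of "j + 5"] rec[of "j + 4"] unfolding k by (simp add: numeral_eq_Suc)
    moreover have "(\<Sum>i = 1..j + 4. \<bar>M i\<bar>) \<ge> \<bar>M (j + 1)\<bar> + \<bar>M (j + 2)\<bar> + \<bar>M (j + 3)\<bar> + \<bar>M (j + 4)\<bar>"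
    proof -
      have "(\<Sum>i = 1..j + 4. \<bar>M i\<bar>)
          = (\<Sum>i = 1..j. \<bar>M i\<bar>) + \<bar>M (j + 1)\<bar> + \<bar>M (j + 2)\<bar> + \<bar>M (j + 3)\<bar> + \<bar>M (j + 4)\<bar>"
        by (simp add: numeral_eq_Suc)
      moreover have "0 \<le> (\<Sum>i = 1..j. \<bar>M i\<bar>)" by (simp add: sum_nonneg)
      ultimately show ?thesis by linarith
    qed
    moreover have "c * (5/4)^(j + 2) \<le> \<bar>M (j + 2)\<bar> + \<bar>M (j + 1)\<bar>"
      using growth[of "j + 2"] by simp
    moreover have "(5/4::real)^(j + 2) = (4/5)^4 * (5/4)^k"
      unfolding k by (simp add: power_add numeral_eq_Suc)
    ultimately show "2 * S k + \<bar>M k\<bar> \<le> 2 * S 2 + 6 * L * k - 2 * c * (4/5)^4 * (5/4)^k"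
      using S_sum[of "j + 4"] \<open>0 \<le> L\<close> unfolding k by (simp add: algebra_simps) linarith
  qed
qed

lemma log_bound_div_tendsto_at_bot:
  fixes M S :: "nat \<Rightarrow> real" and \<theta> :: complex
  assumes \<theta>: "\<theta>^2 - \<theta> + 2 = 0"
    and rec: "\<And>k. 2 \<le> k \<Longrightarrow> \<bar>M (Suc k) - M k + 2 * M (k - 1)\<bar> \<le> 2 * L"
    and S_dec: "\<And>k. 2 \<le> k \<Longrightarrow> S (Suc k) \<le> S k + 3 * L - \<bar>M (k - 1)\<bar>"
    and start: "8 * L < cmod (of_real (M 2) + (\<theta> - 1) * of_real (M 1))"
  shows "filterlim (\<lambda>k. (C + S k / 2 + \<bar>M k\<bar> / 4) / real k) at_bot sequentially"
proof -
  obtain c where "0 < c"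
    and bound: "\<And>k. 6 \<le> k \<Longrightarrow> 2 * S k + \<bar>M k\<bar> \<le> 2 * S 2 + 6 * L * k - c * (5/4)^k"
    using log_bound_le_linear_minus_geometric[OF assms] by blast
  have "filterlim (\<lambda>k. (C + S 2 / 2 + 3 / 2 * L * k - c / 4 * (5/4)^k) / real k) at_bot sequentially"
    using \<open>0 < c\<close> by real_asymp
  then show ?thesis
  proof (rule filterlim_at_bot_mono)
    show "\<forall>\<^sub>F k in sequentially. (C + S k / 2 + \<bar>M k\<bar> / 4) / real k
        \<le> (C + S 2 / 2 + 3 / 2 * L * k - c / 4 * (5/4)^k) / real k"
      using eventually_ge_at_top[of 6]
    proof eventually_elim
      case (elim k)
      then show ?case using bound[OF elim] by (intro divide_right_mono) auto
    qed
  qed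
qed

lemma root_tendsto_zero_if_le_exp:
  fixes a b :: "nat \<Rightarrow> real"
  assumes b: "filterlim (\<lambda>k. b k / real k) at_bot sequentially"
    and a: "\<forall>\<^sub>F k in sequentially. 0 \<le> a k \<and> a k \<le> exp (b k)"
  shows "(\<lambda>k. root k (a k)) \<longlonglongrightarrow> 0"
proof (rule tendsto_sandwich[where f = "\<lambda>_. 0"])
  show "(\<lambda>k. exp (b k / real k)) \<longlonglongrightarrow> 0"
    by (rule filterlim_compose[OF exp_at_bot b])
  show "\<forall>\<^sub>F k in sequentially. 0 \<le> root k (a k)"
    using a by eventually_elim (simp add: real_root_ge_zero)
  show "\<forall>\<^sub>F k in sequentially. root k (a k) \<le> exp (b k / real k)"
    using a eventually_gt_at_top[of 0]
  proof eventually_elim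
    case (elim k)
    then have "root k (a k) \<le> root k (exp (b k))" by simp
    also have "\<dots> = exp (b k / real k)"
      using elim by (simp add: root_powr_inverse powr_def)
    finally show ?case .
  qed
qed simp

\<comment> \<open>HOL extends ln to negative arguments by ln (- x) = ln x.\<close>
lemma ln_abs_real: "ln \<bar>x\<bar> = ln x" for x :: real
  by (cases "0 \<le> x") (simp_all add: ln_minus)

definition log_ratio :: "real^2 \<Rightarrow> real" where
  "log_ratio v = ln ((v $ 1)^2 / (v $ 2)^2)"

definition log_product :: "real^2 \<Rightarrow> real" where
  "log_product v = ln \<bar>v $ 1\<bar> + ln \<bar>v $ 2\<bar>"

lemma log_ratio_eq_diff:
  assumes "v $ 1 \<noteq> 0" "v $ 2 \<noteq> 0"
  shows "log_ratio v = 2 * (ln \<bar>v $ 1\<bar> - ln \<bar>v $ 2\<bar>)"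
proof -
  have "log_ratio v = ln (\<bar>v $ 1\<bar>^2 / \<bar>v $ 2\<bar>^2)"
    unfolding log_ratio_def by simp
  then show ?thesis
    using assms by (simp add: ln_div ln_realpow ln_abs_real algebra_simps del: power2_abs)
qed

lemma norm_le_exp_log_coords:
  fixes v :: "real^2"
  assumes "v $ 1 \<noteq> 0" "v $ 2 \<noteq> 0"
  shows "norm v \<le> exp (ln 2 + log_product v / 2 + \<bar>log_ratio v\<bar> / 4)"
proof -
  have max: "log_product v / 2 + \<bar>log_ratio v\<bar> / 4 = max (ln \<bar>v $ 1\<bar>) (ln \<bar>v $ 2\<bar>)"
    unfolding log_product_def log_ratio_eq_diff[OF assms] by (simp add: max_def abs_if field_simps)
  have "norm v \<le> \<bar>v $ 1\<bar> + \<bar>v $ 2\<bar>"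
    using norm_le_l1_cart[of v] by (simp add: sum_2)
  also have "\<dots> \<le> 2 * exp (max (ln \<bar>v $ 1\<bar>) (ln \<bar>v $ 2\<bar>))"
    using assms by (simp add: max_def)
  also have "\<dots> = exp (ln 2 + log_product v / 2 + \<bar>log_ratio v\<bar> / 4)"
    unfolding add.assoc max by (simp add: exp_add)
  finally show ?thesis .
qed

lemma log_coords_scale:
  fixes v w :: "real^2"
  assumes v: "v $ 1 \<noteq> 0" "v $ 2 \<noteq> 0" and st: "s \<noteq> 0" "t \<noteq> 0"
    and w: "w $ 1 = s * v $ 1" "w $ 2 = t * v $ 2"
  shows "log_ratio w = log_ratio v + 2 * (ln \<bar>s\<bar> - ln \<bar>t\<bar>)"
    and "log_product w = log_product v + ln \<bar>s\<bar> + ln \<bar>t\<bar>"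
proof -
  have w0: "w $ 1 \<noteq> 0" "w $ 2 \<noteq> 0" using v st w by simp_all
  show "log_ratio w = log_ratio v + 2 * (ln \<bar>s\<bar> - ln \<bar>t\<bar>)"
    unfolding log_ratio_eq_diff[OF v] log_ratio_eq_diff[OF w0] w
    using v st by (simp add: abs_mult ln_mult algebra_simps)
  show "log_product w = log_product v + ln \<bar>s\<bar> + ln \<bar>t\<bar>"
    unfolding log_product_def w using v st by (simp add: abs_mult ln_mult)
qed

lemma diagA_mult_vec_nth [simp]:
  "(diagA lam *v y) $ 1 = y $ 1" "(diagA lam *v y) $ 2 = lam * y $ 2"
  by (simp_all add: diagA_def matrix_vector_mult_def sum_2)

lemma inner_real2: "(a::real^2) \<bullet> b = a $ 1 * b $ 1 + a $ 2 * b $ 2"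
  by (simp add: inner_vec_def sum_2)

locale convex_bb_iteration =
  fixes lam :: real and x g :: "nat \<Rightarrow> real^2" and \<alpha> \<gamma> :: "nat \<Rightarrow> real"
  assumes lam: "lam > 1"
    and g_def: "\<And>k. g k = diagA lam *v x k"
    and step: "\<And>k. k \<ge> 1 \<Longrightarrow> x (Suc k) = x k - \<alpha> k *\<^sub>R g k"
    and alpha1: "\<alpha> 1 > 0"
    and alphak: "\<And>k. k \<ge> 2 \<Longrightarrow>
       \<alpha> k = \<gamma> k * (((x k - x (k-1)) \<bullet> (x k - x (k-1))) / ((x k - x (k-1)) \<bullet> (g k - g (k-1))))
            + (1 - \<gamma> k) * (((x k - x (k-1)) \<bullet> (g k - g (k-1))) / ((g k - g (k-1)) \<bullet> (g k - g (k-1))))"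
    and gamma: "\<And>k. k \<ge> 1 \<Longrightarrow> 0 < \<gamma> k \<and> \<gamma> k < 1"
    and g1: "\<And>i. g 1 $ i \<noteq> 0" and g2: "\<And>i. g 2 $ i \<noteq> 0"
begin

lemma gradient_step:
  assumes "1 \<le> k"
  shows "g (Suc k) = g k - \<alpha> k *\<^sub>R (diagA lam *v g k)"
proof -
  have "g (Suc k) = diagA lam *v (x k - \<alpha> k *\<^sub>R g k)" using step[OF assms] g_def by simp
  then show ?thesis
    by (simp add: g_def[of k] matrix_vector_mult_diff_distrib matrix_vector_mult_scaleR)
qed

lemma gradient_step_nth:
  assumes "1 \<le> k"
  shows "g (Suc k) $ 1 = (1 - \<alpha> k) * g k $ 1" "g (Suc k) $ 2 = (1 - lam * \<alpha> k) * g k $ 2"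
  unfolding gradient_step[OF assms] by (simp_all add: algebra_simps)

lemma stepsize_eq:
  assumes "1 \<le> k" "\<alpha> k \<noteq> 0"
  defines "w \<equiv> (g k $ 1)^2" and "z \<equiv> (g k $ 2)^2"
  shows "\<alpha> (Suc k) = \<gamma> (Suc k) * ((w + z) / (w + lam * z))
      + (1 - \<gamma> (Suc k)) * ((w + lam * z) / (w + lam^2 * z))"
proof -
  have s: "x (Suc k) - x k = - (\<alpha> k *\<^sub>R g k)" using step[OF assms(1)] by simp
  have y: "g (Suc k) - g k = - (\<alpha> k *\<^sub>R (diagA lam *v g k))"
    using gradient_step[OF assms(1)] by simp
  have "(x (Suc k) - x k) \<bullet> (x (Suc k) - x k) = (\<alpha> k)^2 * (w + z)"
    "(x (Suc k) - x k) \<bullet> (g (Suc k) - g k) = (\<alpha> k)^2 * (w + lam * z)"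
    "(g (Suc k) - g k) \<bullet> (g (Suc k) - g k) = (\<alpha> k)^2 * (w + lam^2 * z)"
    unfolding inner_real2 s y w_def z_def by (simp_all add: power2_eq_square algebra_simps)
  then show ?thesis using alphak[of "Suc k"] assms(1,2) by simp
qed

lemma coords_nonzero_and_stepsize_bounds:
  assumes "1 \<le> k"
  shows "g k $ 1 \<noteq> 0 \<and> g k $ 2 \<noteq> 0 \<and> \<alpha> k \<noteq> 0 \<and> (2 \<le> k \<longrightarrow> 1 / lam < \<alpha> k \<and> \<alpha> k < 1)"
  using assms
proof (induction k rule: nat_induct_at_least)
  case base
  then show ?case using g1 alpha1 by simp
next
  case (Suc k)
  then have "0 < (g k $ 1)^2" "0 < (g k $ 2)^2" by simp_all
  from bb_stepsize_bounds(1,2)[OF this lam _ _ stepsize_eq] Suc gamma[of "Suc k"]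
  have bounds: "1 / lam < \<alpha> (Suc k)" "\<alpha> (Suc k) < 1" by auto
  moreover have "0 < \<alpha> (Suc k)" by (rule less_trans[OF _ bounds(1)]) (use lam in simp)
  moreover have "g (Suc k) $ 1 \<noteq> 0 \<and> g (Suc k) $ 2 \<noteq> 0"
  proof (cases "k = 1")
    case True
    then show ?thesis using g2 by (simp add: numeral_2_eq_2)
  next
    case False
    then have "1 / lam < \<alpha> k" "\<alpha> k < 1" using Suc by auto
    then have "1 - \<alpha> k \<noteq> 0" "1 - lam * \<alpha> k \<noteq> 0" using lam by (auto simp: field_simps)
    then show ?thesis using gradient_step_nth[OF Suc(1)] Suc(2) by simp
  qed
  ultimately show ?case by simp
qed

lemma coords_nonzero:
  assumes "1 \<le> k"
  shows "g k $ 1 \<noteq> 0" "g k $ 2 \<noteq> 0"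
  using coords_nonzero_and_stepsize_bounds[OF assms] by simp_all

lemma gain_factors_nonzero:
  assumes "2 \<le> k"
  shows "1 - \<alpha> k \<noteq> 0" "1 - lam * \<alpha> k \<noteq> 0"
proof -
  have "1 / lam < \<alpha> k" "\<alpha> k < 1" using coords_nonzero_and_stepsize_bounds[of k] assms by auto
  then show "1 - \<alpha> k \<noteq> 0" "1 - lam * \<alpha> k \<noteq> 0" using lam by (auto simp: field_simps)
qed

lemma stepsize_factors:
  assumes "1 \<le> k"
  defines "w \<equiv> (g k $ 1)^2" and "z \<equiv> (g k $ 2)^2"
  shows "\<bar>1 - \<alpha> (Suc k)\<bar> * \<bar>1 - lam * \<alpha> (Suc k)\<bar> \<le> lam^3 * (w * z / (w + z)^2)"
    and "\<exists>\<rho>. 1 \<le> \<rho> \<and> \<rho> \<le> lam \<and> 1 - \<alpha> (Suc k) = - (z / w) * \<rho> * (1 - lam * \<alpha> (Suc k))"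
proof -
  have "0 < w" "0 < z" "\<alpha> k \<noteq> 0"
    using coords_nonzero_and_stepsize_bounds[OF assms(1)] unfolding w_def z_def by simp_all
  note bounds = bb_stepsize_bounds[OF \<open>0 < w\<close> \<open>0 < z\<close> lam _ _
      stepsize_eq[OF assms(1) \<open>\<alpha> k \<noteq> 0\<close>, folded w_def z_def]]
  show "\<bar>1 - \<alpha> (Suc k)\<bar> * \<bar>1 - lam * \<alpha> (Suc k)\<bar> \<le> lam^3 * (w * z / (w + z)^2)"
    using bounds(3) gamma[of "Suc k"] by simp
  show "\<exists>\<rho>. 1 \<le> \<rho> \<and> \<rho> \<le> lam \<and> 1 - \<alpha> (Suc k) = - (z / w) * \<rho> * (1 - lam * \<alpha> (Suc k))"
    using bounds(4) gamma[of "Suc k"] by simp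
qed

lemma log_ratio_recurrence:
  assumes "2 \<le> k"
  shows "\<bar>log_ratio (g (Suc k)) - log_ratio (g k) + 2 * log_ratio (g (k - 1))\<bar> \<le> 2 * ln lam"
proof -
  obtain j where k: "k = Suc j" and "1 \<le> j" using assms by (cases k) auto
  define w z where "w = (g j $ 1)^2" and "z = (g j $ 2)^2"
  have "0 < w" "0 < z" using coords_nonzero[OF \<open>1 \<le> j\<close>] unfolding w_def z_def by simp_all
  obtain \<rho> where \<rho>: "1 \<le> \<rho>" "\<rho> \<le> lam" and factor: "1 - \<alpha> k = - (z / w) * \<rho> * (1 - lam * \<alpha> k)"
    using stepsize_factors(2)[OF \<open>1 \<le> j\<close>] unfolding k w_def z_def by blast
  note nz = gain_factors_nonzero[OF assms]
  have "log_ratio (g (Suc k)) = log_ratio (g k) + 2 * (ln \<bar>1 - \<alpha> k\<bar> - ln \<bar>1 - lam * \<alpha> k\<bar>)"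
    using log_coords_scale(1)[OF coords_nonzero[of k] nz gradient_step_nth[of k]] assms by simp
  moreover have "ln \<bar>1 - \<alpha> k\<bar> = - ln (w / z) + ln \<rho> + ln \<bar>1 - lam * \<alpha> k\<bar>"
    using \<open>0 < w\<close> \<open>0 < z\<close> \<rho> nz unfolding factor by (simp add: abs_mult ln_mult ln_div)
  moreover have "log_ratio (g (k - 1)) = ln (w / z)" unfolding k w_def z_def log_ratio_def by simp
  moreover have "0 \<le> ln \<rho>" "ln \<rho> \<le> ln lam" using \<rho> by simp_all
  ultimately show ?thesis by simp
qed

lemma log_product_decrease:
  assumes "2 \<le> k"
  shows "log_product (g (Suc k)) \<le> log_product (g k) + 3 * ln lam - \<bar>log_ratio (g (k - 1))\<bar>"
proof -
  obtain j where k: "k = Suc j" and "1 \<le> j" using assms by (cases k) auto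
  define w z where "w = (g j $ 1)^2" and "z = (g j $ 2)^2"
  have "0 < w" "0 < z" using coords_nonzero[OF \<open>1 \<le> j\<close>] unfolding w_def z_def by simp_all
  note nz = gain_factors_nonzero[OF assms]
  have "log_product (g (Suc k)) = log_product (g k) + ln (\<bar>1 - \<alpha> k\<bar> * \<bar>1 - lam * \<alpha> k\<bar>)"
    using log_coords_scale(2)[OF coords_nonzero[of k] nz gradient_step_nth[of k]] assms nz
    by (simp add: ln_mult)
  also have "ln (\<bar>1 - \<alpha> k\<bar> * \<bar>1 - lam * \<alpha> k\<bar>) \<le> ln (lam^3 * (w * z / (w + z)^2))"
    using stepsize_factors(1)[OF \<open>1 \<le> j\<close>] nz \<open>0 < w\<close> \<open>0 < z\<close> lam
    unfolding k w_def z_def by simp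
  also have "\<dots> = 3 * ln lam + ln (w * z / (w + z)^2)"
    using \<open>0 < w\<close> \<open>0 < z\<close> lam by (subst ln_mult_pos) (simp_all add: ln_realpow)
  also have "ln (w * z / (w + z)^2) \<le> - \<bar>log_ratio (g (k - 1))\<bar>"
    using ln_product_div_square_sum_le[OF \<open>0 < w\<close> \<open>0 < z\<close>]
    unfolding k w_def z_def log_ratio_def by simp
  finally show ?thesis by simp
qed

end

theorem theorem2:
  fixes lam :: real and x g :: "nat \<Rightarrow> real^2" and \<alpha> \<gamma> :: "nat \<Rightarrow> real"
    and \<theta> :: complex
  assumes lam: "lam > 1"
    and g_def: "\<And>k. g k = diagA lam *v x k"
    and step: "\<And>k. k \<ge> 1 \<Longrightarrow> x (Suc k) = x k - \<alpha> k *\<^sub>R g k"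
    and alpha1: "\<alpha> 1 > 0"
    and alphak: "\<And>k. k \<ge> 2 \<Longrightarrow>
       \<alpha> k = \<gamma> k * (((x k - x (k-1)) \<bullet> (x k - x (k-1))) / ((x k - x (k-1)) \<bullet> (g k - g (k-1))))
            + (1 - \<gamma> k) * (((x k - x (k-1)) \<bullet> (g k - g (k-1))) / ((g k - g (k-1)) \<bullet> (g k - g (k-1))))"
    and gamma: "\<And>k. k \<ge> 1 \<Longrightarrow> 0 < \<gamma> k \<and> \<gamma> k < 1"
    and g1: "\<And>i. g 1 $ i \<noteq> 0" and g2: "\<And>i. g 2 $ i \<noteq> 0"
    and theta: "\<theta>^2 - \<theta> + 2 = 0"
    and xi: "cmod (complex_of_real (ln ((g 2 $ 1)^2 / (g 2 $ 2)^2))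
               + (\<theta> - 1) * complex_of_real (ln ((g 1 $ 1)^2 / (g 1 $ 2)^2))) > 8 * ln lam"
  shows "(\<lambda>k. root k (norm (g k))) \<longlonglongrightarrow> 0"
proof -
  interpret convex_bb_iteration lam x g \<alpha> \<gamma>
    using lam g_def step alpha1 alphak gamma g1 g2 by unfold_locales
  have "filterlim (\<lambda>k. (ln 2 + log_product (g k) / 2 + \<bar>log_ratio (g k)\<bar> / 4) / real k)
      at_bot sequentially"
    using log_bound_div_tendsto_at_bot[OF theta log_ratio_recurrence log_product_decrease]
      xi[folded log_ratio_def] by simp
  moreover have "\<forall>\<^sub>F k in sequentially.
      0 \<le> norm (g k) \<and> norm (g k) \<le> exp (ln 2 + log_product (g k) / 2 + \<bar>log_ratio (g k)\<bar> / 4)"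
    using eventually_ge_at_top[of 1]
    by eventually_elim (simp add: norm_le_exp_log_coords coords_nonzero)
  ultimately show ?thesis by (rule root_tendsto_zero_if_le_exp)
qed

end
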